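(* Let $G=HN\le\mathrm{Sym}(\Omega)$ be a finite non-Frobenius $2$-transitive affine permutation group, where $N$ is the regular normal elementary abelian subgroup of order $p^k$ ($p$ prime) and $H$ is a point stabiliser. Let $H_p$ be a Sylow $p$-subgroup of $H$ and assume $H_p\ne1$. (i) $[N,H_p]$ is a proper subgroup of $N$, and $tz$ is a derangement for all $t\in H_p$ and all $z\in N\setminus[N,H_p]$. (ii) Suppose furthermore that $\kappa(G)=2$, and let $x\in N\setminus\{1\}$ (so $N\setminus\{1\}=x^G$). Then $H_p$ has exponent $p$, $H_p\setminus\{1\}\subseteq t^H$ for some $t\in H_p\setminus\{1\}$, $|\mathrm C_H(x)|=p^b$ for some $b\ge1$, and hence $|H|=(p^k-1)p^b$.
   Context: A derangement is an element fixing no point; $\kappa(G)$ is the number of conjugacy classes of derangements. A Frobenius group is a transitive non-regular group in which only the identity fixes more than one point. $[N,H_p]$ is the subgroup generated by commutators $[n,h]$, $n\in N$, $h\in H_p$. *)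

theory Defs
  imports "HOL-Algebra.Algebra"
begin

text \<open>Permutation groups on a finite set Omega are subgroups of BijGroup Omega;
  elements are (extensional) bijections of Omega, multiplication is composition.\<close>

abbreviation Sym :: "'a set \<Rightarrow> ('a \<Rightarrow> 'a) monoid" where
  "Sym \<Omega> \<equiv> BijGroup \<Omega>"

definition derangement :: "'a set \<Rightarrow> ('a \<Rightarrow> 'a) \<Rightarrow> bool" where
  "derangement \<Omega> g \<longleftrightarrow> (\<forall>w\<in>\<Omega>. g w \<noteq> w)"

definition point_stab :: "'a set \<Rightarrow> ('a \<Rightarrow> 'a) set \<Rightarrow> 'a \<Rightarrow> ('a \<Rightarrow> 'a) set" where
  "point_stab \<Omega> G w = {g \<in> G. g w = w}"

definition transitive_on :: "'a set \<Rightarrow> ('a \<Rightarrow> 'a) set \<Rightarrow> bool" where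
  "transitive_on \<Omega> G \<longleftrightarrow> \<Omega> \<noteq> {} \<and> (\<forall>a\<in>\<Omega>. \<forall>b\<in>\<Omega>. \<exists>g\<in>G. g a = b)"

definition two_transitive_on :: "'a set \<Rightarrow> ('a \<Rightarrow> 'a) set \<Rightarrow> bool" where
  "two_transitive_on \<Omega> G \<longleftrightarrow> card \<Omega> \<ge> 2 \<and>
     (\<forall>a\<in>\<Omega>. \<forall>b\<in>\<Omega>. \<forall>c\<in>\<Omega>. \<forall>d\<in>\<Omega>. a \<noteq> b \<longrightarrow> c \<noteq> d \<longrightarrow>
        (\<exists>g\<in>G. g a = c \<and> g b = d))"

definition regular_on :: "'a set \<Rightarrow> ('a \<Rightarrow> 'a) set \<Rightarrow> bool" where
  "regular_on \<Omega> G \<longleftrightarrow> transitive_on \<Omega> G \<and>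
     (\<forall>g\<in>G. \<forall>w\<in>\<Omega>. g w = w \<longrightarrow> g = \<one>\<^bsub>Sym \<Omega>\<^esub>)"

definition frobenius_on :: "'a set \<Rightarrow> ('a \<Rightarrow> 'a) set \<Rightarrow> bool" where
  "frobenius_on \<Omega> G \<longleftrightarrow> transitive_on \<Omega> G \<and> \<not> regular_on \<Omega> G \<and>
     (\<forall>g\<in>G. \<forall>a\<in>\<Omega>. \<forall>b\<in>\<Omega>. a \<noteq> b \<and> g a = a \<and> g b = b \<longrightarrow> g = \<one>\<^bsub>Sym \<Omega>\<^esub>)"

definition conj_class :: "'a set \<Rightarrow> ('a \<Rightarrow> 'a) set \<Rightarrow> ('a \<Rightarrow> 'a) \<Rightarrow> ('a \<Rightarrow> 'a) set" where
  "conj_class \<Omega> G g = {h \<otimes>\<^bsub>Sym \<Omega>\<^esub> g \<otimes>\<^bsub>Sym \<Omega>\<^esub> inv\<^bsub>Sym \<Omega>\<^esub> h | h. h \<in> G}"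

definition kappa :: "'a set \<Rightarrow> ('a \<Rightarrow> 'a) set \<Rightarrow> nat" where
  "kappa \<Omega> G = card {conj_class \<Omega> G g | g. g \<in> G \<and> derangement \<Omega> g}"

definition centraliser :: "'a set \<Rightarrow> ('a \<Rightarrow> 'a) set \<Rightarrow> ('a \<Rightarrow> 'a) \<Rightarrow> ('a \<Rightarrow> 'a) set" where
  "centraliser \<Omega> H x = {h \<in> H. h \<otimes>\<^bsub>Sym \<Omega>\<^esub> x = x \<otimes>\<^bsub>Sym \<Omega>\<^esub> h}"

definition commutator_subgroup :: "'a set \<Rightarrow> ('a \<Rightarrow> 'a) set \<Rightarrow> ('a \<Rightarrow> 'a) set \<Rightarrow> ('a \<Rightarrow> 'a) set" where
  "commutator_subgroup \<Omega> N K = generate (Sym \<Omega>)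
     {inv\<^bsub>Sym \<Omega>\<^esub> n \<otimes>\<^bsub>Sym \<Omega>\<^esub> inv\<^bsub>Sym \<Omega>\<^esub> h \<otimes>\<^bsub>Sym \<Omega>\<^esub> n \<otimes>\<^bsub>Sym \<Omega>\<^esub> h | n h. n \<in> N \<and> h \<in> K}"

definition elem_abelian :: "'a set \<Rightarrow> ('a \<Rightarrow> 'a) set \<Rightarrow> nat \<Rightarrow> bool" where
  "elem_abelian \<Omega> N p \<longleftrightarrow>
     (\<forall>x\<in>N. \<forall>y\<in>N. x \<otimes>\<^bsub>Sym \<Omega>\<^esub> y = y \<otimes>\<^bsub>Sym \<Omega>\<^esub> x) \<and>
     (\<forall>x\<in>N. x [^]\<^bsub>Sym \<Omega>\<^esub> p = \<one>\<^bsub>Sym \<Omega>\<^esub>)"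

definition sylow_sub :: "'a set \<Rightarrow> nat \<Rightarrow> ('a \<Rightarrow> 'a) set \<Rightarrow> ('a \<Rightarrow> 'a) set \<Rightarrow> bool" where
  "sylow_sub \<Omega> p H P \<longleftrightarrow> subgroup P (Sym \<Omega>) \<and> P \<subseteq> H \<and>
     card P = p ^ multiplicity p (card H)"

end

theory Submission
  imports Defs
begin

(* The whole argument rests on one observation ("fixed points are commutators"):
   for h in H and n in N, if hn fixes a point then n = h^-1 m h m^-1 for some
   m in N.  Hence hn is a derangement as soon as n avoids these commutators.

   (i)  A p-group acting on a p-group fixes a non-trivial coset of any proper
        invariant subgroup (fixed points are counted modulo p).  Applied to a
        maximal Hp-invariant proper subgroup A of N this shows [N,Hp] <= A < N,
        and then tz is a derangement for z outside [N,Hp] by the observation.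
   (ii) If kappa(G) = 2, then N - 1 is one class of derangements, so all
        derangements outside N form a single G-class.  Every h in H - 1 that
        centralises some x in N - 1 gives, again by the observation, a derangement
        hn outside N; comparing with a derangement tz (t in Hp of order p) and
        passing to G/N = H shows that h is H-conjugate to t.  This yields exponent
        p for Hp and for C_H(x), so C_H(x) is a p-group, and the orbit-stabiliser
        theorem for H acting on N - 1 gives |H| = (p^k - 1) |C_H(x)|. *)

lemma action_as_group_action:
  fixes Q (structure)
  assumes grp: "group Q"
    and closed: "\<And>g x. g \<in> carrier Q \<Longrightarrow> x \<in> E \<Longrightarrow> act g x \<in> E"
    and one: "\<And>x. x \<in> E \<Longrightarrow> act \<one>\<^bsub>Q\<^esub> x = x"
    and mult: "\<And>g h x. g \<in> carrier Q \<Longrightarrow> h \<in> carrier Q \<Longrightarrow> x \<in> E \<Longrightarrow>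
                 act (g \<otimes>\<^bsub>Q\<^esub> h) x = act g (act h x)"
  shows "group_action Q E (\<lambda>g. restrict (act g) E)"
proof -
  interpret Q: group Q by (rule grp)
  have bij: "bij_betw (act g) E E" if g: "g \<in> carrier Q" for g
  proof (rule bij_betw_byWitness[where f'="act (inv\<^bsub>Q\<^esub> g)"])
    show "\<forall>x\<in>E. act (inv\<^bsub>Q\<^esub> g) (act g x) = x" "\<forall>x\<in>E. act g (act (inv\<^bsub>Q\<^esub> g) x) = x"
      using mult[of "inv\<^bsub>Q\<^esub> g" g] mult[of g "inv\<^bsub>Q\<^esub> g"] one g by auto
  qed (use closed g in auto)
  show ?thesis
    unfolding group_action_def group_hom_def group_hom_axioms_def
  proof (intro conjI)
    show "(\<lambda>g. restrict (act g) E) \<in> hom Q (BijGroup E)"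
      unfolding hom_def
    proof (intro CollectI conjI ballI)
      show "(\<lambda>g. restrict (act g) E) \<in> carrier Q \<rightarrow> carrier (BijGroup E)"
        using bij by (auto simp: BijGroup_def Bij_def bij_betw_def inj_on_def)
      fix g h assume g: "g \<in> carrier Q" and h: "h \<in> carrier Q"
      have "restrict (act g) E \<in> Bij E" "restrict (act h) E \<in> Bij E"
        using bij g h by (auto simp: Bij_def bij_betw_def inj_on_def)
      then show "restrict (act (g \<otimes>\<^bsub>Q\<^esub> h)) E =
            restrict (act g) E \<otimes>\<^bsub>BijGroup E\<^esub> restrict (act h) E"
        using g h closed by (auto simp: BijGroup_def compose_def mult)
    qed
  qed (use grp group_BijGroup in auto)
qed

text \<open>The basic counting fact for p-groups: if a group of order p^m acts on a
  finite set whose size is divisible by p, then the number of fixed points is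
  divisible by p, since every non-trivial orbit has size a positive power of p.\<close>
lemma p_group_fixed_points_dvd:
  fixes Q (structure) and p :: nat
  assumes grp: "group Q" and cardQ: "card (carrier Q) = p ^ m"
    and pp: "Factorial_Ring.prime p" and finE: "finite E"
    and closed: "\<And>g x. g \<in> carrier Q \<Longrightarrow> x \<in> E \<Longrightarrow> act g x \<in> E"
    and one: "\<And>x. x \<in> E \<Longrightarrow> act \<one>\<^bsub>Q\<^esub> x = x"
    and mult: "\<And>g h x. g \<in> carrier Q \<Longrightarrow> h \<in> carrier Q \<Longrightarrow> x \<in> E \<Longrightarrow>
                 act (g \<otimes>\<^bsub>Q\<^esub> h) x = act g (act h x)"
    and dvdE: "p dvd card E"
  shows "p dvd card {x\<in>E. \<forall>g\<in>carrier Q. act g x = x}"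
proof -
  interpret Q: group Q by (rule grp)
  define \<phi> where "\<phi> = (\<lambda>g. restrict (act g) E)"
  interpret A: group_action Q E \<phi>
    unfolding \<phi>_def by (rule action_as_group_action[OF grp closed one mult])
  define F where "F = {x\<in>E. \<forall>g\<in>carrier Q. act g x = x}"
  define Y where "Y = E - F"
  have orb: "orbit Q \<phi> x = {act g x | g. g \<in> carrier Q}" if "x \<in> E" for x
    using that by (auto simp: orbit_def \<phi>_def)
  have orbit_in_Y: "orbit Q \<phi> y \<subseteq> Y" if y: "y \<in> Y" for y
  proof
    fix z assume "z \<in> orbit Q \<phi> y"
    then obtain g where g: "g \<in> carrier Q" and z: "z = act g y" using orb y Y_def by auto
    have z_back: "act (inv\<^bsub>Q\<^esub> g) z = y"
      using z mult[of "inv\<^bsub>Q\<^esub> g" g y] one g y Y_def by auto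
    show "z \<in> Y"
    proof (rule ccontr)
      assume "z \<notin> Y"
      hence "z \<in> F" using closed g y z Y_def by auto
      hence "y \<in> F" using z_back F_def g by auto
      thus False using y Y_def by auto
    qed
  qed
  have orbit_dvd: "p dvd card (orbit Q \<phi> y)" if y: "y \<in> Y" for y
  proof -
    have yE: "y \<in> E" using y Y_def by auto
    have "card (orbit Q \<phi> y) * card (stabilizer Q \<phi> y) = p ^ m"
      using A.orbit_stabilizer_theorem[OF yE] cardQ by (simp add: order_def)
    hence "card (orbit Q \<phi> y) dvd p ^ m" by (metis dvd_triv_left)
    then obtain i where i: "card (orbit Q \<phi> y) = p ^ i" using divides_primepow_nat[OF pp] by blast
    obtain g where g: "g \<in> carrier Q" "act g y \<noteq> y" using y Y_def F_def by auto
    have "{y, act g y} \<subseteq> orbit Q \<phi> y" using A.orbit_refl[OF yE] orb[OF yE] g(1) by blast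
    moreover have "finite (orbit Q \<phi> y)" using orbit_in_Y[OF y] finE Y_def finite_subset by blast
    ultimately have "card {y, act g y} \<le> p ^ i" using i by (metis card_mono)
    hence "i \<noteq> 0" using g(2) by (cases i) auto
    thus ?thesis using i by (simp add: dvd_power)
  qed
  let ?C = "(orbit Q \<phi>) ` Y"
  have disj: "pairwise disjnt ?C"
  proof (rule pairwiseI)
    fix O1 O2 assume "O1 \<in> ?C" "O2 \<in> ?C" "O1 \<noteq> O2"
    then have "O1 \<in> orbits Q E \<phi>" "O2 \<in> orbits Q E \<phi>" "O1 \<noteq> O2"
      using Y_def by (auto simp: orbits_def)
    thus "disjnt O1 O2" using A.disjoint_union by (auto simp: disjnt_def)
  qed
  have "\<Union>?C = Y" using orbit_in_Y A.orbit_refl Y_def by auto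
  hence "card Y = card (\<Union>?C)" by simp
  also have "\<dots> = sum card ?C"
  proof (rule card_Union_disjoint[OF disj])
    fix A assume "A \<in> ?C"
    then obtain y where "y \<in> Y" "A = orbit Q \<phi> y" by blast
    thus "finite A" using orbit_in_Y finE Y_def by (metis finite_Diff rev_finite_subset)
  qed
  finally have pY: "p dvd card Y" by (auto intro!: dvd_sum orbit_dvd)
  have FE: "F \<subseteq> E" using F_def by auto
  have "card E = card F + card Y" unfolding Y_def
    using card_Diff_subset[OF finite_subset[OF FE finE] FE] card_mono[OF finE FE] by simp
  hence "p dvd card F" using dvdE pY dvd_add_left_iff by metis
  thus ?thesis unfolding F_def .
qed

lemma prime_power_if_unique_prime_divisor:
  fixes n p :: nat
  assumes n: "n \<noteq> 0" and pp: "Factorial_Ring.prime p"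
    and only: "\<And>q. Factorial_Ring.prime q \<Longrightarrow> q dvd n \<Longrightarrow> q = p"
  shows "n = p ^ multiplicity p n"
proof -
  have np: "\<not> is_unit p" using prime_gt_1_nat[OF pp] by simp
  obtain r where r: "n = p ^ multiplicity p n * r" "\<not> p dvd r"
    by (rule multiplicity_decompose'[of n p]) (use n np in auto)
  have "r = 1"
  proof (rule ccontr)
    assume "r \<noteq> 1"
    then obtain q where q: "Factorial_Ring.prime q" "q dvd r" using prime_factor_nat by blast
    hence "q dvd n" using r(1) by (metis dvd_mult)
    hence "q = p" using only q(1) by blast
    thus False using q(2) r(2) by simp
  qed
  thus ?thesis using r(1) by simp
qed

lemma (in group) subgroup_nat_pow_closed:
  "subgroup K G \<Longrightarrow> x \<in> K \<Longrightarrow> x [^] (n::nat) \<in> K"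
  by (induction n) (auto simp: subgroup.one_closed subgroup.m_closed)

lemma (in group) subgroup_pow_card:
  assumes K: "subgroup K G" and x: "x \<in> K"
  shows "x [^] card K = \<one>"
proof -
  have K_group: "group (G\<lparr>carrier := K\<rparr>)" using subgroup_imp_group[OF K] .
  have "x [^]\<^bsub>G\<lparr>carrier := K\<rparr>\<^esub> order (G\<lparr>carrier := K\<rparr>) = \<one>"
    using group.pow_order_eq_1[OF K_group] x by simp
  thus ?thesis using nat_pow_consistent[of x "card K" K] by (simp add: order_def)
qed

lemma (in group) p_subgroup_elem_of_order_p:
  assumes pp: "Factorial_Ring.prime p" and K: "subgroup K G" and cardK: "card K = p ^ m"
    and g: "g \<in> K" "g \<noteq> \<one>"
  shows "\<exists>t\<in>K. t \<noteq> \<one> \<and> t [^] p = \<one>"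
proof -
  have gG: "g \<in> carrier G" using subgroup.mem_carrier[OF K g(1)] .
  have "ord g dvd p ^ m" using subgroup_pow_card[OF K g(1)] cardK pow_eq_id[OF gG] by simp
  then obtain j where j: "ord g = p ^ j" using divides_primepow_nat[OF pp] by blast
  have "j \<noteq> 0" using j ord_eq_1[OF gG] g(2) by auto
  then obtain i where "j = Suc i" using not0_implies_Suc by blast
  then have ord_g: "ord g = p ^ i * p" using j by simp
  define t where "t = g [^] (p ^ i)"
  have "ord t = ord g div p ^ i"
    unfolding t_def by (rule ord_pow[OF gG]) (use ord_g prime_gt_0_nat[OF pp] in auto)
  hence "ord t = p" using ord_g prime_gt_0_nat[OF pp] by simp
  moreover have tG: "t \<in> carrier G" unfolding t_def using gG by simp
  ultimately have "t \<noteq> \<one>" "t [^] p = \<one>"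
    using ord_eq_1[OF tG] pow_eq_id[OF tG] prime_gt_1_nat[OF pp] by auto
  moreover have "t \<in> K" unfolding t_def using subgroup_nat_pow_closed[OF K g(1)] .
  ultimately show ?thesis by blast
qed

text \<open>Conversely (a weak form of Cauchy's theorem): a finite subgroup of
  exponent p has p-power order, because a Sylow q-subgroup for another prime q
  would contain an element whose order divides both p and a power of q.\<close>
lemma (in group) exponent_p_subgroup_is_p_group:
  assumes pp: "Factorial_Ring.prime p" and K: "subgroup K G" and finK: "finite K"
    and exp: "\<And>g. g \<in> K \<Longrightarrow> g [^] p = \<one>"
  shows "card K = p ^ multiplicity p (card K)"
proof (rule prime_power_if_unique_prime_divisor[OF _ pp])
  show K0: "card K \<noteq> 0" using finK subgroup.one_closed[OF K] by auto
  fix q assume q: "Factorial_Ring.prime q" "q dvd card K"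
  show "q = p"
  proof (rule ccontr)
    assume qp: "q \<noteq> p"
    define a where "a = multiplicity q (card K)"
    obtain r where r: "card K = q ^ a * r" using multiplicity_dvd[of q "card K"] a_def by (metis dvdE)
    have "a \<ge> 1"
      using q prime_gt_1_nat[OF q(1)] multiplicity_gt_zero_iff[OF K0, of q] a_def by simp
    obtain P where P: "subgroup P (G\<lparr>carrier := K\<rparr>)" "card P = q ^ a"
      using sylow_thm[OF q(1) subgroup_imp_group[OF K]] r finK by (auto simp: order_def)
    have Ps: "subgroup P G" using incl_subgroup[OF K P(1)] .
    have PK: "P \<subseteq> K" using P(1) subgroup.subset by fastforce
    have "card P > 1" using P(2) one_less_power[OF prime_gt_1_nat[OF q(1)], of a] \<open>a \<ge> 1\<close> by simp
    then obtain g where g: "g \<in> P" "g \<noteq> \<one>"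
    proof -
      have "\<not> P \<subseteq> {\<one>}" using card_mono[of "{\<one>}" P] \<open>card P > 1\<close> by auto
      thus ?thesis using that by blast
    qed
    have gG: "g \<in> carrier G" using subgroup.mem_carrier[OF Ps g(1)] .
    have "ord g dvd q ^ a" using subgroup_pow_card[OF Ps g(1)] P(2) pow_eq_id[OF gG] by simp
    moreover have "g [^] p = \<one>" using exp g(1) PK by blast
    hence "ord g dvd p" using pow_eq_id[OF gG] by simp
    moreover have "coprime p (q ^ a)" using primes_coprime[OF pp q(1)] qp by simp
    ultimately have "ord g = 1" by (metis coprime_common_divisor_nat coprime_commute)
    thus False using ord_eq_1[OF gG] g(2) by simp
  qed
qed

text \<open>The setting of the lemma: G is a 2-transitive group on the finite set Omega,
  N a regular elementary abelian normal subgroup of order p^k, H the stabiliser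
  of the point w and Hp a non-trivial Sylow p-subgroup of H.\<close>
locale affine_two_transitive =
  fixes \<Omega> :: "'a set" and G N H Hp :: "('a \<Rightarrow> 'a) set" and p k :: nat and \<omega> :: 'a
  assumes fin: "finite \<Omega>"
    and G_sub: "subgroup G (Sym \<Omega>)"
    and two_trans: "two_transitive_on \<Omega> G"
    and p_prime: "Factorial_Ring.prime p"
    and N_normal: "N \<lhd> (Sym \<Omega>)\<lparr>carrier := G\<rparr>"
    and N_regular: "regular_on \<Omega> N"
    and N_elab: "elem_abelian \<Omega> N p"
    and N_card: "card N = p ^ k"
    and \<omega>: "\<omega> \<in> \<Omega>"
    and H_def: "H = point_stab \<Omega> G \<omega>"
    and Hp_syl: "sylow_sub \<Omega> p H Hp"
    and Hp_nontriv: "Hp \<noteq> {\<one>\<^bsub>Sym \<Omega>\<^esub>}"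

sublocale affine_two_transitive \<subseteq> S: group "Sym \<Omega>" by (rule group_BijGroup)

context affine_two_transitive begin

abbreviation mul (infixl "\<star>" 70) where "x \<star> y \<equiv> x \<otimes>\<^bsub>Sym \<Omega>\<^esub> y"
abbreviation iv where "iv x \<equiv> inv\<^bsub>Sym \<Omega>\<^esub> x"
abbreviation one_Sym ("\<one>") where "\<one> \<equiv> \<one>\<^bsub>Sym \<Omega>\<^esub>"

lemma app_closed: "g \<in> carrier (Sym \<Omega>) \<Longrightarrow> w \<in> \<Omega> \<Longrightarrow> g w \<in> \<Omega>"
  by (auto simp: BijGroup_def Bij_def bij_betw_def)
lemma app_mul: "g \<in> carrier (Sym \<Omega>) \<Longrightarrow> h \<in> carrier (Sym \<Omega>) \<Longrightarrow> w \<in> \<Omega> \<Longrightarrow> (g \<star> h) w = g (h w)"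
  by (simp add: BijGroup_def compose_def)
lemma app_one: "w \<in> \<Omega> \<Longrightarrow> \<one> w = w"
  by (simp add: BijGroup_def)
lemma app_inv: "g \<in> carrier (Sym \<Omega>) \<Longrightarrow> w \<in> \<Omega> \<Longrightarrow> iv g (g w) = w"
  by (metis S.l_inv app_mul app_one S.inv_closed)

lemmas mul_assoc_rev = S.m_assoc[symmetric]

lemma cancel_right [simp]: "x \<in> carrier (Sym \<Omega>) \<Longrightarrow> y \<in> carrier (Sym \<Omega>) \<Longrightarrow> x \<star> y \<star> iv y = x"
  by (simp add: S.m_assoc)
lemma cancel_right' [simp]: "x \<in> carrier (Sym \<Omega>) \<Longrightarrow> y \<in> carrier (Sym \<Omega>) \<Longrightarrow> x \<star> iv y \<star> y = x"
  by (simp add: S.m_assoc)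

lemma finite_Sym: "finite (carrier (Sym \<Omega>))"
proof -
  have "carrier (Sym \<Omega>) \<subseteq> PiE \<Omega> (\<lambda>_. \<Omega>)"
    by (auto simp: BijGroup_def Bij_def PiE_def bij_betw_def)
  moreover have "finite (PiE \<Omega> (\<lambda>_. \<Omega>))" using fin by (simp add: finite_PiE)
  ultimately show ?thesis using finite_subset by blast
qed

lemma G_S: "G \<subseteq> carrier (Sym \<Omega>)" using G_sub subgroup.subset by blast
lemma G_mul: "g \<in> G \<Longrightarrow> h \<in> G \<Longrightarrow> g \<star> h \<in> G" by (rule subgroup.m_closed[OF G_sub])
lemma G_inv: "g \<in> G \<Longrightarrow> iv g \<in> G" by (rule subgroup.m_inv_closed[OF G_sub])

lemma N_sub_G: "subgroup N ((Sym \<Omega>)\<lparr>carrier := G\<rparr>)" using N_normal normal_def by blast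
lemma N_sub: "subgroup N (Sym \<Omega>)" using S.incl_subgroup[OF G_sub N_sub_G] .
lemma N_G: "N \<subseteq> G" using subgroup.subset[OF N_sub_G] by simp
lemma N_S: "N \<subseteq> carrier (Sym \<Omega>)" using N_G G_S by blast
lemma N_mul: "g \<in> N \<Longrightarrow> h \<in> N \<Longrightarrow> g \<star> h \<in> N" by (rule subgroup.m_closed[OF N_sub])
lemma N_inv: "g \<in> N \<Longrightarrow> iv g \<in> N" by (rule subgroup.m_inv_closed[OF N_sub])
lemma N_one: "\<one> \<in> N" by (rule subgroup.one_closed[OF N_sub])
lemma N_conj: "g \<in> G \<Longrightarrow> n \<in> N \<Longrightarrow> g \<star> n \<star> iv g \<in> N"
  using normal.inv_op_closed2[OF N_normal, of g n] G_sub by (simp add: S.m_inv_consistent)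
lemma N_conj': "g \<in> G \<Longrightarrow> n \<in> N \<Longrightarrow> iv g \<star> n \<star> g \<in> N"
  using normal.inv_op_closed1[OF N_normal, of g n] G_sub by (simp add: S.m_inv_consistent)
lemma N_comm: "x \<in> N \<Longrightarrow> y \<in> N \<Longrightarrow> x \<star> y = y \<star> x"
  using N_elab by (simp add: elem_abelian_def)
lemma N_trans: "a \<in> \<Omega> \<Longrightarrow> b \<in> \<Omega> \<Longrightarrow> \<exists>n\<in>N. n a = b"
  using N_regular by (simp add: regular_on_def transitive_on_def)
lemma N_reg: "n \<in> N \<Longrightarrow> w \<in> \<Omega> \<Longrightarrow> n w = w \<Longrightarrow> n = \<one>"
  using N_regular by (auto simp: regular_on_def)
lemma finite_N: "finite N" using finite_subset[OF N_S finite_Sym] .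

lemma N_nontrivial: "\<exists>n\<in>N. n \<noteq> \<one>"
proof -
  have "\<not> card \<Omega> \<le> Suc 0" using two_trans by (simp add: two_transitive_on_def)
  then obtain a b where ab: "a \<in> \<Omega>" "b \<in> \<Omega>" "a \<noteq> b"
    using card_le_Suc0_iff_eq[OF fin] by blast
  obtain n where n: "n \<in> N" "n a = b" using N_trans[OF ab(1,2)] by blast
  have "n \<noteq> \<one>" using n ab app_one by force
  thus ?thesis using n by blast
qed

lemma H_sub: "subgroup H (Sym \<Omega>)"
proof -
  have "H = G \<inter> {g \<in> carrier (Sym \<Omega>). g \<omega> = \<omega>}" using H_def G_S by (auto simp: point_stab_def)
  moreover have "subgroup {g \<in> carrier (Sym \<Omega>). g \<omega> = \<omega>} (Sym \<Omega>)"
    by (rule S.subgroupI) (auto simp: app_mul app_one \<omega> S.m_closed, metis app_inv \<omega>)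
  ultimately show ?thesis using G_sub S.subgroups_Inter_pair by auto
qed
lemma H_G: "H \<subseteq> G" using H_def by (auto simp: point_stab_def)
lemma H_S: "H \<subseteq> carrier (Sym \<Omega>)" using H_G G_S by blast
lemma H_mul: "g \<in> H \<Longrightarrow> h \<in> H \<Longrightarrow> g \<star> h \<in> H" by (rule subgroup.m_closed[OF H_sub])
lemma H_inv: "g \<in> H \<Longrightarrow> iv g \<in> H" by (rule subgroup.m_inv_closed[OF H_sub])
lemma H_fix: "h \<in> H \<Longrightarrow> h \<omega> = \<omega>" using H_def by (auto simp: point_stab_def)
lemma H_I: "g \<in> G \<Longrightarrow> g \<omega> = \<omega> \<Longrightarrow> g \<in> H" using H_def by (auto simp: point_stab_def)
lemma finite_H: "finite H" using finite_subset[OF H_S finite_Sym] .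

lemma H_inter_N: "h \<in> H \<Longrightarrow> h \<in> N \<Longrightarrow> h = \<one>" using H_fix N_reg \<omega> by blast

lemma Hp_sub: "subgroup Hp (Sym \<Omega>)" and Hp_H: "Hp \<subseteq> H"
  and Hp_card: "card Hp = p ^ multiplicity p (card H)"
  using Hp_syl by (auto simp: sylow_sub_def)
lemma Hp_S: "Hp \<subseteq> carrier (Sym \<Omega>)" using Hp_H H_S by blast
lemma Hp_G: "Hp \<subseteq> G" using Hp_H H_G by blast
lemma Hp_mul: "g \<in> Hp \<Longrightarrow> h \<in> Hp \<Longrightarrow> g \<star> h \<in> Hp" by (rule subgroup.m_closed[OF Hp_sub])
lemma Hp_inv: "h \<in> Hp \<Longrightarrow> iv h \<in> Hp" by (rule subgroup.m_inv_closed[OF Hp_sub])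

lemma factorisation_HN:
  assumes g: "g \<in> G" shows "\<exists>c\<in>H. \<exists>a\<in>N. g = c \<star> a"
proof -
  have gS: "g \<in> carrier (Sym \<Omega>)" using g G_S by blast
  obtain n where n: "n \<in> N" "n \<omega> = g \<omega>" using N_trans[OF \<omega> app_closed[OF gS \<omega>]] by blast
  have nS: "n \<in> carrier (Sym \<Omega>)" using n N_S by blast
  define c where "c = iv n \<star> g"
  have cG: "c \<in> G" unfolding c_def using G_mul[OF G_inv g] n(1) N_G by blast
  have "c \<omega> = \<omega>" unfolding c_def using app_mul nS gS \<omega> n(2) app_inv by (metis S.inv_closed)
  hence cH: "c \<in> H" using H_I cG by blast
  have cS: "c \<in> carrier (Sym \<Omega>)" using cG G_S by blast
  have "c \<star> (iv c \<star> n \<star> c) = g" unfolding c_def using nS gS by (simp add: mul_assoc_rev)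
  moreover have "iv c \<star> n \<star> c \<in> N" using N_conj' cG n(1) by blast
  ultimately show ?thesis using cH by blast
qed

text \<open>The key observation: if hn (h in H, n in N) fixes a point, then n is a
  commutator h^-1 m h m^-1 with m in N, namely m maps w to the fixed point.\<close>
lemma fixed_point_commutator:
  assumes h: "h \<in> H" and n: "n \<in> N" and w: "w \<in> \<Omega>" and fx: "(h \<star> n) w = w"
  shows "\<exists>m\<in>N. n = iv h \<star> m \<star> h \<star> iv m"
proof -
  obtain m where m: "m \<in> N" "m \<omega> = w" using N_trans[OF \<omega> w] by blast
  have hS: "h \<in> carrier (Sym \<Omega>)" using h H_S by blast
  have nS: "n \<in> carrier (Sym \<Omega>)" using n N_S by blast
  have mS: "m \<in> carrier (Sym \<Omega>)" using m N_S by blast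
  define u where "u = iv m \<star> h \<star> n \<star> m"
  have "u \<omega> = iv m ((h \<star> n) (m \<omega>))" unfolding u_def
    using hS nS mS \<omega> by (simp add: app_mul S.m_closed app_closed)
  hence "u \<omega> = \<omega>" using m fx app_inv[OF mS \<omega>] by simp
  moreover have "u \<in> G" unfolding u_def using h H_G m n N_G G_sub
    by (meson subgroup.m_closed subgroup.m_inv_closed subsetD)
  ultimately have uH: "u \<in> H" using H_I by blast
  define v where "v = (iv h \<star> iv m \<star> h) \<star> n \<star> m"
  have "h \<in> G" using h H_G by blast
  hence vN: "v \<in> N" unfolding v_def using N_mul[OF N_mul[OF N_conj' n(1)] m(1)] N_inv[OF m(1)] by blast
  have "v = iv h \<star> u" unfolding u_def v_def using hS nS mS by (simp add: mul_assoc_rev)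
  hence "v \<in> H" using uH h H_mul H_inv by simp
  hence v1: "v = \<one>" using H_inter_N vN by blast
  have "n = iv (iv h \<star> iv m \<star> h) \<star> (v \<star> iv m)"
    unfolding v_def using hS nS mS by (simp add: mul_assoc_rev S.inv_mult_group)
  also have "\<dots> = iv h \<star> m \<star> h \<star> iv m" using v1 hS mS by (simp add: S.inv_mult_group S.m_assoc)
  finally show ?thesis using m(1) by blast
qed

text \<open>2-transitivity of G means that H acts transitively on N - 1 by conjugation.\<close>
lemma stabiliser_conj_transitive:
  assumes x: "x \<in> N" "x \<noteq> \<one>" and y: "y \<in> N" "y \<noteq> \<one>"
  shows "\<exists>g\<in>H. g \<star> x \<star> iv g = y"
proof -
  have xS: "x \<in> carrier (Sym \<Omega>)" and yS: "y \<in> carrier (Sym \<Omega>)" using x y N_S by auto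
  have "x \<omega> \<noteq> \<omega>" "y \<omega> \<noteq> \<omega>" using N_reg x y \<omega> by blast+
  then obtain g where g: "g \<in> G" "g \<omega> = \<omega>" "g (x \<omega>) = y \<omega>"
    using two_trans \<omega> app_closed[OF xS \<omega>] app_closed[OF yS \<omega>]
    unfolding two_transitive_on_def by metis
  have gH: "g \<in> H" using H_I g by blast
  have gS: "g \<in> carrier (Sym \<Omega>)" using g G_S by blast
  define u where "u = g \<star> x \<star> iv g"
  have uN: "u \<in> N" unfolding u_def using N_conj g(1) x(1) by blast
  have uS: "u \<in> carrier (Sym \<Omega>)" using uN N_S by blast
  have "iv g \<omega> = \<omega>" using app_inv[OF gS \<omega>] g(2) by simp
  hence "u \<omega> = y \<omega>" unfolding u_def using gS xS \<omega> g(3) by (simp add: app_mul app_closed)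
  hence "(iv y \<star> u) \<omega> = \<omega>" using app_inv[OF yS \<omega>] yS uS \<omega> by (simp add: app_mul)
  hence "iv y \<star> u = \<one>" using N_reg[OF N_mul[OF N_inv[OF y(1)] uN] \<omega>] by blast
  hence "u = y" using yS uS by (metis S.inv_equality S.inv_inv S.inv_closed)
  thus ?thesis using gH u_def by blast
qed

text \<open>Subgroups of N normalised by Hp, and the elements of N that Hp centralises
  modulo such a subgroup A (i.e. the preimage of the Hp-fixed points of N/A).\<close>
definition Hp_invariant :: "('a \<Rightarrow> 'a) set \<Rightarrow> bool" where
  "Hp_invariant A \<longleftrightarrow> subgroup A (Sym \<Omega>) \<and> A \<subseteq> N \<and> (\<forall>h\<in>Hp. \<forall>a\<in>A. h \<star> a \<star> iv h \<in> A)"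

definition central_mod :: "('a \<Rightarrow> 'a) set \<Rightarrow> ('a \<Rightarrow> 'a) set" where
  "central_mod A = {y\<in>N. \<forall>h\<in>Hp. h \<star> y \<star> iv h \<star> iv y \<in> A}"

lemma conj_rcoset:
  assumes A: "Hp_invariant A" and h: "h \<in> Hp" and y: "y \<in> carrier (Sym \<Omega>)"
  shows "(\<lambda>z. h \<star> z \<star> iv h) ` (A #>\<^bsub>Sym \<Omega>\<^esub> y) = A #>\<^bsub>Sym \<Omega>\<^esub> (h \<star> y \<star> iv h)"
proof -
  have AS: "A \<subseteq> carrier (Sym \<Omega>)" and inv: "\<And>h a. h \<in> Hp \<Longrightarrow> a \<in> A \<Longrightarrow> h \<star> a \<star> iv h \<in> A"
    using A N_S unfolding Hp_invariant_def by auto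
  have hS: "h \<in> carrier (Sym \<Omega>)" using h Hp_S by blast
  have conj_prod: "h \<star> (a \<star> y) \<star> iv h = (h \<star> a \<star> iv h) \<star> (h \<star> y \<star> iv h)" if "a \<in> A" for a
    using that AS hS y by (auto simp: mul_assoc_rev)
  have conj_back: "iv h \<star> a \<star> h \<in> A" if "a \<in> A" for a
    using inv[OF Hp_inv[OF h] that] hS by simp
  have unconj: "a \<star> (h \<star> y \<star> iv h) = h \<star> ((iv h \<star> a \<star> h) \<star> y) \<star> iv h" if "a \<in> A" for a
    using that AS hS y by (auto simp: mul_assoc_rev)
  show ?thesis
  proof
    show "(\<lambda>z. h \<star> z \<star> iv h) ` (A #>\<^bsub>Sym \<Omega>\<^esub> y) \<subseteq> A #>\<^bsub>Sym \<Omega>\<^esub> (h \<star> y \<star> iv h)"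
    proof
      fix z assume "z \<in> (\<lambda>z. h \<star> z \<star> iv h) ` (A #>\<^bsub>Sym \<Omega>\<^esub> y)"
      then obtain a where "a \<in> A" "z = h \<star> (a \<star> y) \<star> iv h" unfolding r_coset_def by blast
      thus "z \<in> A #>\<^bsub>Sym \<Omega>\<^esub> (h \<star> y \<star> iv h)"
        unfolding r_coset_def using conj_prod inv[OF h] by blast
    qed
    show "A #>\<^bsub>Sym \<Omega>\<^esub> (h \<star> y \<star> iv h) \<subseteq> (\<lambda>z. h \<star> z \<star> iv h) ` (A #>\<^bsub>Sym \<Omega>\<^esub> y)"
    proof
      fix z assume "z \<in> A #>\<^bsub>Sym \<Omega>\<^esub> (h \<star> y \<star> iv h)"
      then obtain a where "a \<in> A" "z = a \<star> (h \<star> y \<star> iv h)" unfolding r_coset_def by blast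
      thus "z \<in> (\<lambda>z. h \<star> z \<star> iv h) ` (A #>\<^bsub>Sym \<Omega>\<^esub> y)"
        unfolding r_coset_def using conj_back unconj by blast
    qed
  qed
qed

text \<open>Counting modulo p: since A is a proper subgroup of the p-group N, the number
  of cosets of A is a positive power of p, hence so is, modulo p, the number of
  cosets fixed by the p-group Hp.  The trivial coset A is fixed, so another
  coset Ab is fixed; that is, b is centralised by Hp modulo A.\<close>
lemma central_mod_exceeds:
  assumes A: "Hp_invariant A" and AN: "A \<noteq> N"
  shows "\<exists>b\<in>N - A. b \<in> central_mod A"
proof -
  have As: "subgroup A (Sym \<Omega>)" and AsubN: "A \<subseteq> N" using A unfolding Hp_invariant_def by auto
  have AS: "A \<subseteq> carrier (Sym \<Omega>)" using AsubN N_S by blast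
  define E where "E = (\<lambda>y. A #>\<^bsub>Sym \<Omega>\<^esub> y) ` N"
  define act where "act h Y = (\<lambda>z. h \<star> z \<star> iv h) ` Y" for h Y
  let ?Q = "(Sym \<Omega>)\<lparr>carrier := Hp\<rparr>"
  have act_coset: "act h (A #>\<^bsub>Sym \<Omega>\<^esub> y) = A #>\<^bsub>Sym \<Omega>\<^esub> (h \<star> y \<star> iv h)"
    if "h \<in> Hp" "y \<in> N" for h y
    unfolding act_def using conj_rcoset[OF A] that N_S by blast
  have dvdE: "p dvd card E"
  proof -
    let ?N = "(Sym \<Omega>)\<lparr>carrier := N\<rparr>"
    have "rcosets\<^bsub>?N\<^esub> A = E" unfolding RCOSETS_def E_def by auto
    hence "card E * card A = p ^ k"
      using group.lagrange[OF S.subgroup_imp_group[OF N_sub] S.subgroup_incl[OF As N_sub AsubN]]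
        N_card by (simp add: order_def)
    then obtain i where i: "card E = p ^ i"
      using divides_primepow_nat[OF p_prime] by (metis dvd_triv_left)
    have "i \<noteq> 0"
    proof
      assume "i = 0"
      hence "card A = card N" using \<open>card E * card A = p ^ k\<close> i N_card by simp
      thus False using card_subset_eq[OF finite_N AsubN] AN by simp
    qed
    thus ?thesis using i by (simp add: dvd_power)
  qed
  have "p dvd card {K\<in>E. \<forall>h\<in>carrier ?Q. act h K = K}"
  proof (rule p_group_fixed_points_dvd[OF S.subgroup_imp_group[OF Hp_sub] _ p_prime _ _ _ _ dvdE])
    show "card (carrier ?Q) = p ^ multiplicity p (card H)" using Hp_card by simp
    show "finite E" unfolding E_def using finite_N by simp
    show "act h K \<in> E" if "h \<in> carrier ?Q" "K \<in> E" for h K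
      using that act_coset N_conj Hp_G unfolding E_def by auto
    show "act \<one>\<^bsub>?Q\<^esub> K = K" if "K \<in> E" for K
      using that act_coset[OF subgroup.one_closed[OF Hp_sub]] N_S unfolding E_def by auto
    show "act (g \<otimes>\<^bsub>?Q\<^esub> h) K = act g (act h K)"
      if gh: "g \<in> carrier ?Q" "h \<in> carrier ?Q" and K: "K \<in> E" for g h K
    proof -
      obtain y where y: "y \<in> N" "K = A #>\<^bsub>Sym \<Omega>\<^esub> y" using K unfolding E_def by blast
      from gh have gh: "g \<in> Hp" "h \<in> Hp" by auto
      have "g \<in> carrier (Sym \<Omega>)" "h \<in> carrier (Sym \<Omega>)" "y \<in> carrier (Sym \<Omega>)"
        using gh y(1) N_S Hp_S by auto
      hence "(g \<star> h) \<star> y \<star> iv (g \<star> h) = g \<star> (h \<star> y \<star> iv h) \<star> iv g"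
        by (simp add: mul_assoc_rev S.inv_mult_group)
      thus ?thesis using act_coset Hp_mul[OF gh] gh y N_conj Hp_G by auto
    qed
  qed
  hence dvdF: "p dvd card {K\<in>E. \<forall>h\<in>Hp. act h K = K}" by simp
  have A_fixed: "A \<in> {K\<in>E. \<forall>h\<in>Hp. act h K = K}"
  proof -
    have "A #>\<^bsub>Sym \<Omega>\<^esub> \<one> = A" using AS by simp
    moreover have "h \<star> \<one> \<star> iv h = \<one>" if "h \<in> Hp" for h using that Hp_S by auto
    ultimately show ?thesis unfolding E_def using act_coset N_one by force
  qed
  obtain Y where Y: "Y \<in> E" "\<forall>h\<in>Hp. act h Y = Y" "Y \<noteq> A"
  proof (rule ccontr)
    assume "\<not> thesis"
    hence "{K\<in>E. \<forall>h\<in>Hp. act h K = K} = {A}" using A_fixed that by blast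
    thus False using dvdF p_prime by simp
  qed
  then obtain b where b: "b \<in> N" "Y = A #>\<^bsub>Sym \<Omega>\<^esub> b" unfolding E_def by blast
  have bS: "b \<in> carrier (Sym \<Omega>)" using b N_S by blast
  have "b \<notin> A" using S.coset_join2[OF bS As] Y(3) b(2) by blast
  moreover have "h \<star> b \<star> iv h \<star> iv b \<in> A" if h: "h \<in> Hp" for h
  proof -
    have hbS: "h \<star> b \<star> iv h \<in> carrier (Sym \<Omega>)" using h Hp_S bS by blast
    have "A #>\<^bsub>Sym \<Omega>\<^esub> (h \<star> b \<star> iv h) = A #>\<^bsub>Sym \<Omega>\<^esub> b"
      using act_coset[OF h b(1)] Y(2) h b(2) by simp
    hence "h \<star> b \<star> iv h \<in> A #>\<^bsub>Sym \<Omega>\<^esub> b" using S.rcos_self[OF hbS As] by simp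
    thus ?thesis using subgroup.rcos_module_imp[OF As S.is_group bS] by blast
  qed
  ultimately show ?thesis unfolding central_mod_def using b(1) by blast
qed

text \<open>The elements of N centralised by Hp modulo A again form an Hp-invariant
  subgroup, which contains A.  (Here we use that N is abelian.)\<close>
lemma central_mod_invariant:
  assumes A: "Hp_invariant A"
  shows "Hp_invariant (central_mod A)" and "A \<subseteq> central_mod A"
proof -
  have As: "subgroup A (Sym \<Omega>)" and AsubN: "A \<subseteq> N"
    and Ai: "\<And>h a. h \<in> Hp \<Longrightarrow> a \<in> A \<Longrightarrow> h \<star> a \<star> iv h \<in> A"
    using A unfolding Hp_invariant_def by auto
  have A_mul: "x \<star> y \<in> A" if "x \<in> A" "y \<in> A" for x y using subgroup.m_closed[OF As that] .
  have A_inv: "iv x \<in> A" if "x \<in> A" for x using subgroup.m_inv_closed[OF As that] .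
  let ?C = "central_mod A"
  have CN: "?C \<subseteq> N" unfolding central_mod_def by blast
  have C_one: "\<one> \<in> ?C" unfolding central_mod_def using N_one Hp_S subgroup.one_closed[OF As] by auto
  have C_inv: "iv y \<in> ?C" if y: "y \<in> ?C" for y
  proof -
    have yN: "y \<in> N" and yS: "y \<in> carrier (Sym \<Omega>)" using y CN N_S by auto
    have "h \<star> iv y \<star> iv h \<star> iv (iv y) \<in> A" if h: "h \<in> Hp" for h
    proof -
      have hS: "h \<in> carrier (Sym \<Omega>)" using h Hp_S by blast
      have u: "h \<star> iv y \<star> iv h \<in> N" using N_conj h Hp_G N_inv[OF yN] by blast
      have "h \<star> iv y \<star> iv h \<star> iv (iv y) = y \<star> (h \<star> iv y \<star> iv h)" using N_comm[OF u yN] yS by simp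
      also have "\<dots> = iv (h \<star> y \<star> iv h \<star> iv y)" using hS yS by (simp add: mul_assoc_rev S.inv_mult_group)
      finally show ?thesis using A_inv y h unfolding central_mod_def by auto
    qed
    thus ?thesis unfolding central_mod_def using N_inv[OF yN] by blast
  qed
  have C_mul: "y1 \<star> y2 \<in> ?C" if y1: "y1 \<in> ?C" and y2: "y2 \<in> ?C" for y1 y2
  proof -
    have yN: "y1 \<in> N" "y2 \<in> N" and yS: "y1 \<in> carrier (Sym \<Omega>)" "y2 \<in> carrier (Sym \<Omega>)"
      using y1 y2 CN N_S by auto
    have "h \<star> (y1 \<star> y2) \<star> iv h \<star> iv (y1 \<star> y2) \<in> A" if h: "h \<in> Hp" for h
    proof -
      have hS: "h \<in> carrier (Sym \<Omega>)" using h Hp_S by blast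
      have c1: "h \<star> y1 \<star> iv h \<star> iv y1 \<in> A" and c2: "h \<star> y2 \<star> iv h \<star> iv y2 \<in> A"
        using y1 y2 h unfolding central_mod_def by auto
      have "h \<star> (y1 \<star> y2) \<star> iv h \<star> iv (y1 \<star> y2)
          = (h \<star> y1 \<star> iv h \<star> iv y1) \<star> (y1 \<star> (h \<star> y2 \<star> iv h \<star> iv y2) \<star> iv y1)"
        using hS yS by (simp add: mul_assoc_rev S.inv_mult_group)
      also have "y1 \<star> (h \<star> y2 \<star> iv h \<star> iv y2) = (h \<star> y2 \<star> iv h \<star> iv y2) \<star> y1"
        using N_comm[OF yN(1)] c2 AsubN by blast
      finally show ?thesis using A_mul[OF c1 c2] c2 hS yS AsubN N_S by (auto simp: mul_assoc_rev)
    qed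
    thus ?thesis unfolding central_mod_def using N_mul[OF yN] by blast
  qed
  have C_conj: "g \<star> y \<star> iv g \<in> ?C" if g: "g \<in> Hp" and y: "y \<in> ?C" for g y
  proof -
    have yN: "y \<in> N" and yS: "y \<in> carrier (Sym \<Omega>)" using y CN N_S by auto
    have gS: "g \<in> carrier (Sym \<Omega>)" using g Hp_S by blast
    have "h \<star> (g \<star> y \<star> iv g) \<star> iv h \<star> iv (g \<star> y \<star> iv g) \<in> A" if h: "h \<in> Hp" for h
    proof -
      have hS: "h \<in> carrier (Sym \<Omega>)" using h Hp_S by blast
      have c1: "(h \<star> g) \<star> y \<star> iv (h \<star> g) \<star> iv y \<in> A" and c2: "g \<star> y \<star> iv g \<star> iv y \<in> A"
        using y Hp_mul[OF h g] g unfolding central_mod_def by auto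
      have "h \<star> (g \<star> y \<star> iv g) \<star> iv h \<star> iv (g \<star> y \<star> iv g)
          = ((h \<star> g) \<star> y \<star> iv (h \<star> g) \<star> iv y) \<star> iv (g \<star> y \<star> iv g \<star> iv y)"
        using hS gS yS by (simp add: mul_assoc_rev S.inv_mult_group)
      thus ?thesis using A_mul[OF c1 A_inv[OF c2]] by simp
    qed
    moreover have "g \<star> y \<star> iv g \<in> N" using N_conj g Hp_G yN by blast
    ultimately show ?thesis unfolding central_mod_def by blast
  qed
  have "subgroup ?C (Sym \<Omega>)"
    by (rule S.subgroupI) (use CN N_S C_one C_inv C_mul in auto)
  thus "Hp_invariant ?C" unfolding Hp_invariant_def using CN C_conj by blast
  show "A \<subseteq> ?C"
  proof
    fix a assume a: "a \<in> A"
    have "h \<star> a \<star> iv h \<star> iv a \<in> A" if "h \<in> Hp" for h using A_mul[OF Ai[OF that a] A_inv[OF a]] .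
    thus "a \<in> ?C" unfolding central_mod_def using a AsubN by blast
  qed
qed

text \<open>Since N is abelian, the generator n^-1 h^-1 n h of [N,G] equals
  h^-1 n h n^-1, a commutator of n with h^-1 in the form used above.\<close>
lemma commutator_swap:
  assumes n: "n \<in> N" and h: "h \<in> G"
  shows "iv n \<star> iv h \<star> n \<star> h = iv h \<star> n \<star> h \<star> iv n"
proof -
  have hS: "h \<in> carrier (Sym \<Omega>)" using h G_S by blast
  have nS: "n \<in> carrier (Sym \<Omega>)" using n N_S by blast
  have "iv n \<star> iv h \<star> n \<star> h = iv n \<star> (iv h \<star> n \<star> h)" using hS nS by (simp add: mul_assoc_rev)
  also have "\<dots> = (iv h \<star> n \<star> h) \<star> iv n" using N_comm[OF N_inv[OF n] N_conj'[OF h n]] .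
  finally show ?thesis .
qed

text \<open>Take a maximal
  proper Hp-invariant subgroup A of N; by maximality every element of N is
  centralised by Hp modulo A, so all commutators lie in A.\<close>
lemma commutator_subgroup_proper: "commutator_subgroup \<Omega> N Hp \<subset> N"
proof -
  define \<A> where "\<A> = {A. Hp_invariant A \<and> A \<noteq> N}"
  have "\<A> \<subseteq> Pow N" unfolding \<A>_def Hp_invariant_def by blast
  hence "finite \<A>" using finite_N by (simp add: finite_subset)
  moreover have "{\<one>} \<in> \<A>"
    unfolding \<A>_def Hp_invariant_def using S.triv_subgroup N_one N_nontrivial Hp_S by auto
  ultimately obtain A where A: "A \<in> \<A>" and maxA: "\<forall>B\<in>\<A>. A \<subseteq> B \<longrightarrow> A = B"
    using finite_has_maximal by blast
  have A_inv: "Hp_invariant A" and AN: "A \<noteq> N" using A unfolding \<A>_def by auto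
  obtain b where b: "b \<in> N - A" "b \<in> central_mod A" using central_mod_exceeds[OF A_inv AN] by blast
  have C_N: "central_mod A = N"
  proof (rule ccontr)
    assume "central_mod A \<noteq> N"
    hence "A = central_mod A" using maxA central_mod_invariant[OF A_inv] unfolding \<A>_def by blast
    thus False using b by blast
  qed
  have gens_A: "{iv n \<star> iv h \<star> n \<star> h | n h. n \<in> N \<and> h \<in> Hp} \<subseteq> A"
  proof clarify
    fix n h assume n: "n \<in> N" and h: "h \<in> Hp"
    have "iv n \<star> iv h \<star> n \<star> h = iv h \<star> n \<star> iv (iv h) \<star> iv n"
      using commutator_swap[OF n subsetD[OF Hp_G h]] S.inv_inv[OF subsetD[OF Hp_S h]] by simp
    moreover have "iv h \<star> n \<star> iv (iv h) \<star> iv n \<in> A"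
      using C_N n Hp_inv[OF h] unfolding central_mod_def by blast
    ultimately show "iv n \<star> iv h \<star> n \<star> h \<in> A" by simp
  qed
  have "commutator_subgroup \<Omega> N Hp \<subseteq> A"
    unfolding commutator_subgroup_def
    using S.generate_subgroup_incl[OF gens_A] A_inv unfolding Hp_invariant_def by blast
  thus ?thesis using A_inv AN unfolding Hp_invariant_def by blast
qed

text \<open>Part (i), second claim: if tz fixes a point (t in Hp, z in N), then z is a
  commutator of N with Hp, by the key observation.\<close>
lemma derangement_outside_commutator:
  assumes t: "t \<in> Hp" and z: "z \<in> N" and zM: "z \<notin> commutator_subgroup \<Omega> N Hp"
  shows "derangement \<Omega> (t \<star> z)"
  unfolding derangement_def
proof (intro ballI notI)
  fix w assume w: "w \<in> \<Omega>" and fx: "(t \<star> z) w = w"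
  obtain m where m: "m \<in> N" "z = iv t \<star> m \<star> t \<star> iv m"
    using fixed_point_commutator[OF _ z w fx] t Hp_H by blast
  have "z = iv m \<star> iv t \<star> m \<star> t" using m commutator_swap[OF m(1)] t Hp_G by auto
  hence "z \<in> commutator_subgroup \<Omega> N Hp"
    unfolding commutator_subgroup_def using m(1) t by (blast intro: generate.incl)
  thus False using zM by simp
qed

text \<open>Hp centralises some non-trivial element of N (the case A = 1 above).\<close>
lemma Hp_centralises_nontrivial: "\<exists>b\<in>N. b \<noteq> \<one> \<and> (\<forall>h\<in>Hp. h \<star> b = b \<star> h)"
proof -
  have "Hp_invariant {\<one>}" unfolding Hp_invariant_def using S.triv_subgroup N_one Hp_S by auto
  then obtain b where b: "b \<in> N - {\<one>}" "b \<in> central_mod {\<one>}"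
    using central_mod_exceeds N_nontrivial by blast
  have bS: "b \<in> carrier (Sym \<Omega>)" using b N_S by blast
  have "h \<star> b = b \<star> h" if h: "h \<in> Hp" for h
  proof -
    have hS: "h \<in> carrier (Sym \<Omega>)" using h Hp_S by blast
    have "h \<star> b \<star> iv h \<star> iv b = \<one>" using b h unfolding central_mod_def by blast
    moreover have "h \<star> b \<star> iv h = h \<star> b \<star> iv h \<star> iv b \<star> b" using hS bS by simp
    ultimately have "h \<star> b \<star> iv h = b" using bS by simp
    moreover have "h \<star> b = h \<star> b \<star> iv h \<star> h" using hS bS by simp
    ultimately show ?thesis by simp
  qed
  thus ?thesis using b by blast
qed

text \<open>If h in H centralises some y in N - 1, then the map m |-> h^-1 m h m^-1 on N
  is not injective, hence not surjective; for n outside its image, hn is a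
  derangement by the key observation.\<close>
lemma centralising_gives_derangement:
  assumes h: "h \<in> H" and y: "y \<in> N" "y \<noteq> \<one>" "h \<star> y = y \<star> h"
  shows "\<exists>n\<in>N. derangement \<Omega> (h \<star> n)"
proof -
  have hS: "h \<in> carrier (Sym \<Omega>)" and hG: "h \<in> G" using h H_S H_G by auto
  have yS: "y \<in> carrier (Sym \<Omega>)" using y N_S by blast
  define \<phi> where "\<phi> m = iv h \<star> m \<star> h \<star> iv m" for m
  have \<phi>N: "\<phi> ` N \<subseteq> N" unfolding \<phi>_def using N_mul N_conj'[OF hG] N_inv by blast
  have "\<phi> y = \<one>"
  proof -
    have "iv h \<star> y \<star> h = iv h \<star> (h \<star> y)" using y(3) hS yS by (simp add: S.m_assoc)
    also have "\<dots> = y" using hS yS by (simp add: mul_assoc_rev)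
    finally have "iv h \<star> y \<star> h = y" .
    thus ?thesis unfolding \<phi>_def using yS by simp
  qed
  moreover have "\<phi> \<one> = \<one>" unfolding \<phi>_def using hS by simp
  ultimately have "\<not> inj_on \<phi> N" using inj_onD[of \<phi> N y \<one>] y(1,2) N_one by auto
  hence "card (\<phi> ` N) \<noteq> card N" using inj_on_iff_eq_card[OF finite_N] by blast
  hence "\<phi> ` N \<noteq> N" by auto
  then obtain n where n: "n \<in> N" "n \<notin> \<phi> ` N" using \<phi>N by blast
  have "derangement \<Omega> (h \<star> n)"
    unfolding derangement_def
  proof (intro ballI notI)
    fix w assume "w \<in> \<Omega>" "(h \<star> n) w = w"
    then obtain m where "m \<in> N" "n = iv h \<star> m \<star> h \<star> iv m"
      using fixed_point_commutator[OF h n(1)] by blast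
    thus False using n(2) unfolding \<phi>_def by blast
  qed
  thus ?thesis using n(1) by blast
qed

lemma H_times_N_outside_N:
  assumes h: "h \<in> H" "h \<noteq> \<one>" and n: "n \<in> N"
  shows "h \<star> n \<notin> N"
proof
  assume "h \<star> n \<in> N"
  hence "h \<star> n \<star> iv n \<in> N" using N_mul N_inv n by blast
  moreover have "h \<star> n \<star> iv n = h" using h(1) H_S n N_S by (simp add: subsetD)
  ultimately show False using H_inter_N h by auto
qed

text \<open>If kappa(G) = 2, all derangements of G outside N are G-conjugate: the class
  of a non-trivial element of N (a derangement, N being regular) lies inside N
  and is one of the only two classes.\<close>
lemma kappa_two_derangements_conjugate:
  assumes kap: "kappa \<Omega> G = 2"
    and D: "D \<in> G - N" "derangement \<Omega> D" and T: "T \<in> G - N" "derangement \<Omega> T"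
  shows "D \<in> conj_class \<Omega> G T"
proof -
  define K where "K = {conj_class \<Omega> G g | g. g \<in> G \<and> derangement \<Omega> g}"
  have cK: "card K = 2" using kap unfolding kappa_def K_def .
  have self_in: "g \<in> conj_class \<Omega> G g" if "g \<in> G" for g
  proof -
    have "g = \<one> \<star> g \<star> iv \<one>" using that G_S by auto
    thus ?thesis unfolding conj_class_def using subgroup.one_closed[OF G_sub] by blast
  qed
  obtain x where x: "x \<in> N" "x \<noteq> \<one>" using N_nontrivial by blast
  have "derangement \<Omega> x" unfolding derangement_def using N_reg x by blast
  hence inK: "conj_class \<Omega> G x \<in> K" "conj_class \<Omega> G T \<in> K" "conj_class \<Omega> G D \<in> K"
    unfolding K_def using x N_G D T by blast+
  have "conj_class \<Omega> G x \<subseteq> N" unfolding conj_class_def using N_conj x by blast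
  hence ne: "conj_class \<Omega> G x \<noteq> conj_class \<Omega> G T" "conj_class \<Omega> G x \<noteq> conj_class \<Omega> G D"
    using self_in D T by blast+
  have "conj_class \<Omega> G T = conj_class \<Omega> G D"
  proof (rule ccontr)
    assume "conj_class \<Omega> G T \<noteq> conj_class \<Omega> G D"
    hence "card {conj_class \<Omega> G x, conj_class \<Omega> G T, conj_class \<Omega> G D} = 3" using ne by simp
    moreover have "finite K" using cK card.infinite by force
    hence "card {conj_class \<Omega> G x, conj_class \<Omega> G T, conj_class \<Omega> G D} \<le> card K"
      by (rule card_mono) (use inK in blast)
    ultimately have "3 \<le> card K" by simp
    thus False using cK by simp
  qed
  thus ?thesis using self_in D by blast
qed

text \<open>Passing to G/N = H: if hn and tz are G-conjugate (h, t in H; n, z in N),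
  then h and t are H-conjugate.\<close>
lemma conjugate_mod_N:
  assumes h: "h \<in> H" and t: "t \<in> H" and n: "n \<in> N" and z: "z \<in> N"
    and conj: "h \<star> n \<in> conj_class \<Omega> G (t \<star> z)"
  shows "\<exists>c\<in>H. h = c \<star> t \<star> iv c"
proof -
  obtain g where g: "g \<in> G" "h \<star> n = g \<star> (t \<star> z) \<star> iv g" using conj unfolding conj_class_def by blast
  obtain c a where ca: "c \<in> H" "a \<in> N" "g = c \<star> a" using factorisation_HN[OF g(1)] by blast
  have S: "h \<in> carrier (Sym \<Omega>)" "t \<in> carrier (Sym \<Omega>)" "n \<in> carrier (Sym \<Omega>)" "z \<in> carrier (Sym \<Omega>)"
    "c \<in> carrier (Sym \<Omega>)" "a \<in> carrier (Sym \<Omega>)" using h t n z ca H_S N_S by auto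
  define u where "u = c \<star> t \<star> iv c"
  have uH: "u \<in> H" unfolding u_def using ca(1) t H_mul H_inv by blast
  have uS: "u \<in> carrier (Sym \<Omega>)" using uH H_S by blast
  have "h = h \<star> n \<star> iv n" using S by simp
  also have "\<dots> = c \<star> a \<star> (t \<star> z) \<star> iv (c \<star> a) \<star> iv n" using g(2) ca(3) by simp
  finally have h_eq: "h = c \<star> a \<star> (t \<star> z) \<star> iv (c \<star> a) \<star> iv n" .
  have "iv u \<star> h = c \<star> ((iv t \<star> a \<star> t) \<star> z \<star> iv a) \<star> iv c \<star> iv n"
    unfolding u_def using S h_eq by (simp add: mul_assoc_rev S.inv_mult_group)
  moreover have "(iv t \<star> a \<star> t) \<star> z \<star> iv a \<in> N"
    using N_mul[OF N_mul[OF N_conj'[OF _ ca(2)] z] N_inv[OF ca(2)]] t H_G by blast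
  ultimately have "iv u \<star> h \<in> N" using N_mul[OF N_conj[OF subsetD[OF H_G ca(1)]] N_inv[OF n]] by simp
  moreover have "iv u \<star> h \<in> H" using uH h H_mul H_inv by blast
  ultimately have "iv u \<star> h = \<one>" using H_inter_N by blast
  hence "h = u" using S uS by (metis S.inv_equality S.inv_inv S.inv_closed)
  thus ?thesis using ca(1) u_def by blast
qed

text \<open>The heart of part (ii): when kappa(G) = 2, every non-trivial element of H
  centralising a non-trivial element of N is H-conjugate to any given t in Hp - 1.
  Both hn (for suitable n) and tz (for z outside [N,Hp]) are derangements outside N.\<close>
lemma centralising_conjugate:
  assumes kap: "kappa \<Omega> G = 2" and t: "t \<in> Hp" "t \<noteq> \<one>"
    and h: "h \<in> H" "h \<noteq> \<one>" and y: "y \<in> N" "y \<noteq> \<one>" "h \<star> y = y \<star> h"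
  shows "\<exists>c\<in>H. h = c \<star> t \<star> iv c"
proof -
  obtain n where n: "n \<in> N" "derangement \<Omega> (h \<star> n)"
    using centralising_gives_derangement[OF h(1) y] by blast
  obtain z where z: "z \<in> N" "z \<notin> commutator_subgroup \<Omega> N Hp"
    using commutator_subgroup_proper by blast
  have tH: "t \<in> H" using t Hp_H by blast
  have "h \<star> n \<in> G - N" using H_times_N_outside_N[OF h n(1)] G_mul h(1) n(1) H_G N_G by blast
  moreover have "t \<star> z \<in> G - N" using H_times_N_outside_N[OF tH t(2) z(1)] G_mul tH z(1) H_G N_G by blast
  ultimately
  have "h \<star> n \<in> conj_class \<Omega> G (t \<star> z)"
    using kappa_two_derangements_conjugate[OF kap] n(2)
      derangement_outside_commutator[OF t(1) z] by blast
  thus ?thesis using conjugate_mod_N[OF h(1) tH n(1) z(1)] by blast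
qed

lemma conj_pow:
  assumes c: "c \<in> carrier (Sym \<Omega>)" and t: "t \<in> carrier (Sym \<Omega>)"
  shows "(c \<star> t \<star> iv c) [^]\<^bsub>Sym \<Omega>\<^esub> (n::nat) = c \<star> (t [^]\<^bsub>Sym \<Omega>\<^esub> n) \<star> iv c"
proof (induction n)
  case 0 thus ?case using c by simp
next
  case (Suc n)
  have "t [^]\<^bsub>Sym \<Omega>\<^esub> n \<in> carrier (Sym \<Omega>)" using t by simp
  thus ?case using Suc c t by (simp add: mul_assoc_rev)
qed

text \<open>Part (ii), first two claims: for kappa(G) = 2 and t in Hp of order p, every
  non-trivial element of Hp is H-conjugate to t (each centralises the element b
  of N - 1 fixed by Hp), so Hp has exponent p.\<close>
lemma Hp_elements_conjugate:
  assumes kap: "kappa \<Omega> G = 2" and t: "t \<in> Hp" "t \<noteq> \<one>" and h: "h \<in> Hp" "h \<noteq> \<one>"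
  shows "h \<in> conj_class \<Omega> H t"
proof -
  obtain b where "b \<in> N" "b \<noteq> \<one>" "h \<star> b = b \<star> h" using Hp_centralises_nontrivial h(1) by blast
  then obtain c where "c \<in> H" "h = c \<star> t \<star> iv c"
    using centralising_conjugate[OF kap t _ h(2)] h(1) Hp_H by blast
  thus ?thesis unfolding conj_class_def by blast
qed

lemma conjugate_exponent_p:
  assumes t: "t \<in> H" "t [^]\<^bsub>Sym \<Omega>\<^esub> p = \<one>" and g: "g \<in> conj_class \<Omega> H t"
  shows "g [^]\<^bsub>Sym \<Omega>\<^esub> p = \<one>"
proof -
  obtain c where c: "c \<in> H" "g = c \<star> t \<star> iv c" using g unfolding conj_class_def by blast
  thus ?thesis using conj_pow[of c t p] t subsetD[OF H_S c(1)] subsetD[OF H_S t(1)] by simp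
qed

lemma centraliser_subgroup: "subgroup (centraliser \<Omega> H x) (Sym \<Omega>)" if x: "x \<in> carrier (Sym \<Omega>)"
proof (rule S.subgroupI)
  show "centraliser \<Omega> H x \<subseteq> carrier (Sym \<Omega>)" unfolding centraliser_def using H_S by blast
  show "centraliser \<Omega> H x \<noteq> {}"
    unfolding centraliser_def using subgroup.one_closed[OF H_sub] x by auto
next
  fix a assume "a \<in> centraliser \<Omega> H x"
  hence aH: "a \<in> H" and e: "a \<star> x = x \<star> a" unfolding centraliser_def by auto
  have aS: "a \<in> carrier (Sym \<Omega>)" using aH H_S by blast
  have "iv a \<star> x = iv a \<star> (x \<star> a) \<star> iv a" using aS x by (simp add: mul_assoc_rev)
  also have "\<dots> = iv a \<star> (a \<star> x) \<star> iv a" using e by simp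
  also have "\<dots> = x \<star> iv a" using aS x by (simp add: mul_assoc_rev)
  finally show "iv a \<in> centraliser \<Omega> H x" unfolding centraliser_def using H_inv[OF aH] by blast
next
  fix a b assume "a \<in> centraliser \<Omega> H x" "b \<in> centraliser \<Omega> H x"
  hence ab: "a \<in> H" "b \<in> H" "a \<star> x = x \<star> a" "b \<star> x = x \<star> b" unfolding centraliser_def by auto
  have S: "a \<in> carrier (Sym \<Omega>)" "b \<in> carrier (Sym \<Omega>)" using ab H_S by auto
  have "a \<star> b \<star> x = a \<star> (x \<star> b)" using ab(4) S x by (simp add: S.m_assoc)
  also have "\<dots> = x \<star> (a \<star> b)" using ab(3) S x by (simp add: mul_assoc_rev)
  finally have "a \<star> b \<star> x = x \<star> (a \<star> b)" .
  thus "a \<star> b \<in> centraliser \<Omega> H x" unfolding centraliser_def using H_mul ab by blast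
qed

text \<open>Orbit-stabiliser for H acting on N - 1 by conjugation: the action is
  transitive by 2-transitivity, and the stabiliser of x is C_H(x).\<close>
lemma card_H_orbit_stabiliser:
  assumes x: "x \<in> N" "x \<noteq> \<one>"
  shows "card H = (p ^ k - 1) * card (centraliser \<Omega> H x)"
proof -
  define E where "E = N - {\<one>}"
  define act where "act g y = g \<star> y \<star> iv g" for g y
  let ?Q = "(Sym \<Omega>)\<lparr>carrier := H\<rparr>"
  have xE: "x \<in> E" and xS: "x \<in> carrier (Sym \<Omega>)" using x E_def N_S by auto
  have closed: "act g y \<in> E" if "g \<in> carrier ?Q" "y \<in> E" for g y
  proof -
    have g: "g \<in> H" and y: "y \<in> N" "y \<noteq> \<one>" using that E_def by auto
    have gS: "g \<in> carrier (Sym \<Omega>)" and yS: "y \<in> carrier (Sym \<Omega>)" using g y H_S N_S by auto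
    hence "iv g \<star> act g y \<star> g = y" unfolding act_def by (simp add: mul_assoc_rev)
    hence "act g y \<noteq> \<one>" using y gS by auto
    thus ?thesis unfolding E_def act_def using N_conj g H_G y by blast
  qed
  have one: "act \<one>\<^bsub>?Q\<^esub> y = y" if "y \<in> E" for y
    using that E_def N_S unfolding act_def by auto
  have mult: "act (g \<otimes>\<^bsub>?Q\<^esub> h) y = act g (act h y)"
    if "g \<in> carrier ?Q" "h \<in> carrier ?Q" "y \<in> E" for g h y
  proof -
    have "g \<in> carrier (Sym \<Omega>)" "h \<in> carrier (Sym \<Omega>)" "y \<in> carrier (Sym \<Omega>)"
      using that H_S E_def N_S by auto
    thus ?thesis unfolding act_def by (simp add: mul_assoc_rev S.inv_mult_group)
  qed
  define \<phi> where "\<phi> g = restrict (act g) E" for g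
  interpret A: group_action ?Q E \<phi>
    unfolding \<phi>_def
  proof (rule action_as_group_action)
    show "group ?Q" by (rule S.subgroup_imp_group[OF H_sub])
  qed (use closed one mult in blast)+
  have "orbit ?Q \<phi> x = E"
  proof
    show "orbit ?Q \<phi> x \<subseteq> E" using closed xE unfolding orbit_def \<phi>_def by auto
    show "E \<subseteq> orbit ?Q \<phi> x"
    proof
      fix y assume y: "y \<in> E"
      obtain g where g: "g \<in> H" "g \<star> x \<star> iv g = y" using stabiliser_conj_transitive[OF x] y E_def by auto
      hence "\<phi> g x = y" unfolding \<phi>_def act_def using xE by simp
      thus "y \<in> orbit ?Q \<phi> x" unfolding orbit_def using g by auto
    qed
  qed
  moreover have "stabilizer ?Q \<phi> x = centraliser \<Omega> H x"
  proof -
    have "g \<star> x \<star> iv g = x \<longleftrightarrow> g \<star> x = x \<star> g" if "g \<in> H" for g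
    proof
      have gS: "g \<in> carrier (Sym \<Omega>)" using that H_S by blast
      show "g \<star> x = x \<star> g" if "g \<star> x \<star> iv g = x"
        using that cancel_right'[OF S.m_closed[OF gS xS] gS] by simp
      show "g \<star> x \<star> iv g = x" if "g \<star> x = x \<star> g" using that gS xS by simp
    qed
    thus ?thesis unfolding stabilizer_def centraliser_def \<phi>_def act_def using xE by auto
  qed
  moreover have "card E = p ^ k - 1" unfolding E_def using N_one finite_N N_card by (simp add: card_Diff_singleton)
  ultimately show ?thesis using A.orbit_stabilizer_theorem[OF xE] by (simp add: order_def)
qed

lemma p_dvd_card_H: "p dvd card H"
proof -
  obtain h where h: "h \<in> Hp" "h \<noteq> \<one>" using Hp_nontriv subgroup.one_closed[OF Hp_sub] by blast
  have "{\<one>, h} \<subseteq> Hp" using h subgroup.one_closed[OF Hp_sub] by blast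
  hence "card {\<one>, h} \<le> card Hp" using card_mono finite_subset[OF Hp_S finite_Sym] by blast
  hence "2 \<le> card Hp" using h(2) by simp
  hence "multiplicity p (card H) \<noteq> 0" using Hp_card by (intro notI) simp
  moreover have "card H \<noteq> 0" using finite_H subgroup.one_closed[OF H_sub] by auto
  moreover have "\<not> is_unit p" using prime_gt_1_nat[OF p_prime] by simp
  ultimately show ?thesis using multiplicity_gt_zero_iff[of "card H" p] by simp
qed

text \<open>Part (ii), last claim: for kappa(G) = 2, C_H(x) has exponent p (its non-trivial
  elements are conjugate to t), hence is a p-group, and it is non-trivial since p
  divides |H| = (p^k - 1)|C_H(x)| but not p^k - 1.\<close>
lemma centraliser_card:
  assumes kap: "kappa \<Omega> G = 2" and t: "t \<in> Hp" "t \<noteq> \<one>" "t [^]\<^bsub>Sym \<Omega>\<^esub> p = \<one>"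
    and x: "x \<in> N" "x \<noteq> \<one>"
  shows "\<exists>b\<ge>1. card (centraliser \<Omega> H x) = p ^ b \<and> card H = (p ^ k - 1) * p ^ b"
proof -
  let ?C = "centraliser \<Omega> H x"
  have xS: "x \<in> carrier (Sym \<Omega>)" using x N_S by blast
  have exp: "g [^]\<^bsub>Sym \<Omega>\<^esub> p = \<one>" if g: "g \<in> ?C" for g
  proof (cases "g = \<one>")
    case False
    have "g \<in> H" "g \<star> x = x \<star> g" using g unfolding centraliser_def by auto
    hence "g \<in> conj_class \<Omega> H t"
      using centralising_conjugate[OF kap t(1,2) _ False x] unfolding conj_class_def by blast
    thus ?thesis using conjugate_exponent_p t Hp_H by blast
  qed simp
  have "?C \<subseteq> H" unfolding centraliser_def by blast
  then obtain b where C_pow: "card ?C = p ^ b"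
    using S.exponent_p_subgroup_is_p_group[OF p_prime centraliser_subgroup[OF xS]
        finite_subset[OF _ finite_H] exp] by blast
  have card_H: "card H = (p ^ k - 1) * card ?C" using card_H_orbit_stabiliser[OF x] .
  have "k \<noteq> 0"
  proof
    assume "k = 0"
    hence "card N = 1" using N_card by simp
    then obtain a where "N = {a}" by (rule card_1_singletonE)
    thus False using N_one N_nontrivial by blast
  qed
  have "\<not> p dvd p ^ k - 1"
  proof
    assume "p dvd p ^ k - 1"
    moreover have "p dvd p ^ k" using \<open>k \<noteq> 0\<close> by simp
    moreover have "p ^ k \<ge> 1" using prime_gt_0_nat[OF p_prime] by simp
    ultimately have "p dvd 1" using dvd_diff_nat[of p "p ^ k" "p ^ k - 1"] by simp
    thus False using p_prime by simp
  qed
  hence "p dvd p ^ b" using p_dvd_card_H card_H C_pow p_prime prime_dvd_mult_iff by metis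
  hence "b \<ge> 1" using p_prime by (cases b) auto
  thus ?thesis using C_pow card_H by auto
qed

end

theorem lemma4p5:
  fixes \<Omega> :: "'a set" and G N H Hp :: "('a \<Rightarrow> 'a) set" and p k :: nat and \<omega> :: 'a
  assumes fin: "finite \<Omega>"
    and G_sub: "subgroup G (Sym \<Omega>)"
    and two_trans: "two_transitive_on \<Omega> G"
    and non_frob: "\<not> frobenius_on \<Omega> G"
    and p_prime: "Factorial_Ring.prime p"
    and N_normal: "N \<lhd> (Sym \<Omega>)\<lparr>carrier := G\<rparr>"
    and N_regular: "regular_on \<Omega> N"
    and N_elab: "elem_abelian \<Omega> N p"
    and N_card: "card N = p ^ k"
    and \<omega>: "\<omega> \<in> \<Omega>"
    and H_def: "H = point_stab \<Omega> G \<omega>"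
    and Hp_syl: "sylow_sub \<Omega> p H Hp"
    and Hp_nontriv: "Hp \<noteq> {\<one>\<^bsub>Sym \<Omega>\<^esub>}"
  shows "commutator_subgroup \<Omega> N Hp \<subset> N \<and>
         (\<forall>t\<in>Hp. \<forall>z\<in>N - commutator_subgroup \<Omega> N Hp.
            derangement \<Omega> (t \<otimes>\<^bsub>Sym \<Omega>\<^esub> z)) \<and>
        (kappa \<Omega> G = 2 \<longrightarrow> (\<forall>x\<in>N - {\<one>\<^bsub>Sym \<Omega>\<^esub>}.
         (\<forall>h\<in>Hp. h [^]\<^bsub>Sym \<Omega>\<^esub> p = \<one>\<^bsub>Sym \<Omega>\<^esub>) \<and>
         (\<exists>t\<in>Hp - {\<one>\<^bsub>Sym \<Omega>\<^esub>}. Hp - {\<one>\<^bsub>Sym \<Omega>\<^esub>} \<subseteq> conj_class \<Omega> H t) \<and>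
         (\<exists>b\<ge>1. card (centraliser \<Omega> H x) = p ^ b \<and> card H = (p ^ k - 1) * p ^ b)))"
proof -
  interpret A: affine_two_transitive \<Omega> G N H Hp p k \<omega>
    by (rule affine_two_transitive.intro) (rule assms)+
  \<comment> \<open>An element t of order p in Hp, to which all of Hp - 1 will be conjugate.\<close>
  obtain t where t: "t \<in> Hp" "t \<noteq> \<one>\<^bsub>Sym \<Omega>\<^esub>" "t [^]\<^bsub>Sym \<Omega>\<^esub> p = \<one>\<^bsub>Sym \<Omega>\<^esub>"
    using A.S.p_subgroup_elem_of_order_p[OF p_prime A.Hp_sub A.Hp_card] Hp_nontriv
      subgroup.one_closed[OF A.Hp_sub] by blast
  have part_ii: "(\<forall>h\<in>Hp. h [^]\<^bsub>Sym \<Omega>\<^esub> p = \<one>\<^bsub>Sym \<Omega>\<^esub>) \<and>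
      (\<exists>t\<in>Hp - {\<one>\<^bsub>Sym \<Omega>\<^esub>}. Hp - {\<one>\<^bsub>Sym \<Omega>\<^esub>} \<subseteq> conj_class \<Omega> H t) \<and>
      (\<exists>b\<ge>1. card (centraliser \<Omega> H x) = p ^ b \<and> card H = (p ^ k - 1) * p ^ b)"
    if kap: "kappa \<Omega> G = 2" and x: "x \<in> N - {\<one>\<^bsub>Sym \<Omega>\<^esub>}" for x
  proof -
    have Hp_class: "Hp - {\<one>\<^bsub>Sym \<Omega>\<^esub>} \<subseteq> conj_class \<Omega> H t"
      using A.Hp_elements_conjugate[OF kap t(1,2)] by blast
    have "h [^]\<^bsub>Sym \<Omega>\<^esub> p = \<one>\<^bsub>Sym \<Omega>\<^esub>" if "h \<in> Hp" for h
      using that Hp_class A.conjugate_exponent_p t A.Hp_H by (cases "h = \<one>\<^bsub>Sym \<Omega>\<^esub>") auto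
    thus ?thesis using Hp_class t A.centraliser_card[OF kap t] x by blast
  qed
  show ?thesis
    using A.commutator_subgroup_proper A.derangement_outside_commutator part_ii by blast
qed

end
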